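(* Let $X_1,\dots,X_n$ be independent random variables with values in $\mathbb{Z}_+$ and means $E(X_i)=p_i>0$, and let $S_n=\sum_{i=1}^nX_i$, $\lambda=\sum_{i=1}^np_i$. Then $$K(S_n)\le\sum_{i=1}^n\frac{p_i}{\lambda}K(X_i).$$
   Context: For a random variable $X$ with distribution $P$ on $\mathbb{Z}_+$ and mean $m>0$, the scaled score function is $\rho_X(x)=\frac{(x+1)P(x+1)}{mP(x)}-1$ and the scaled Fisher information is $K(X)=mE[\rho_X(X)^2]=m\sum_{x\ge0}\frac{\big(\frac{(x+1)P(x+1)}{m}-P(x)\big)^2}{P(x)}$, with conventions $0/0=0$, $c/0=\infty$ for $c>0$. *)

theory Defs
  imports "HOL-Probability.Probability"
begin

definition fisher_term :: "(nat \<Rightarrow> real) \<Rightarrow> real \<Rightarrow> nat \<Rightarrow> ennreal" where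
  "fisher_term P m x =
     (let c = ((real (x + 1) * P (x + 1)) / m - P x)\<^sup>2 in
      if P x = 0 then (if c = 0 then 0 else \<infinity>) else ennreal (c / P x))"

definition scaled_fisher :: "(nat \<Rightarrow> real) \<Rightarrow> real \<Rightarrow> ennreal" where
  "scaled_fisher P m = ennreal m * (\<Sum>x. fisher_term P m x)"

definition K_rv :: "'a measure \<Rightarrow> ('a \<Rightarrow> nat) \<Rightarrow> ennreal" where
  "K_rv M Y = scaled_fisher (\<lambda>x. measure M {\<omega> \<in> space M. Y \<omega> = x})
                            (integral\<^sup>L M (\<lambda>\<omega>. real (Y \<omega>)))"

end

(*
  For independent U, V with means a, b put \<alpha> = a/(a+b), \<beta> = b/(a+b).  A Leibniz rule for
  convolutions shows that the scaled score of U + V at s is the conditional expectation, given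
  U + V = s, of \<alpha> \<rho>_U(U) + \<beta> \<rho>_V(V).  Cauchy-Schwarz on each fibre {U + V = s} therefore
  bounds K(U + V)/(a+b) by E[(\<alpha> \<rho>_U(U) + \<beta> \<rho>_V(V))^2] = \<alpha>^2 K(U)/a + \<beta>^2 K(V)/b, the
  cross term vanishing because scores have mean zero.  Hence K(U + V) <= \<alpha> K(U) + \<beta> K(V),
  and induction on the number of summands gives the theorem.
*)
theory Submission
  imports Defs
begin

lemma Cauchy_Schwarz_sum_factored:
  fixes g w k :: "'b \<Rightarrow> real"
  assumes "\<And>x. x \<in> A \<Longrightarrow> w x \<ge> 0" "\<And>x. x \<in> A \<Longrightarrow> k x \<ge> 0"
    and "\<And>x. x \<in> A \<Longrightarrow> (g x)\<^sup>2 = w x * k x"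
  shows "(\<Sum>x\<in>A. g x)\<^sup>2 \<le> (\<Sum>x\<in>A. w x) * (\<Sum>x\<in>A. k x)"
proof -
  have abs_g: "\<bar>g x\<bar> = sqrt (w x) * sqrt (k x)" if "x \<in> A" for x
    using assms[OF that] by (metis real_sqrt_abs real_sqrt_mult)
  have "(\<Sum>x\<in>A. g x)\<^sup>2 \<le> (\<Sum>x\<in>A. \<bar>g x\<bar>)\<^sup>2"
    by (metis abs_ge_zero power2_abs power_mono sum_abs)
  also have "\<dots> = (\<Sum>x\<in>A. sqrt (w x) * sqrt (k x))\<^sup>2"
    using abs_g by simp
  also have "\<dots> \<le> (\<Sum>x\<in>A. (sqrt (w x))\<^sup>2) * (\<Sum>x\<in>A. (sqrt (k x))\<^sup>2)"
    by (rule Cauchy_Schwarz_ineq_sum)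
  also have "\<dots> = (\<Sum>x\<in>A. w x) * (\<Sum>x\<in>A. k x)"
    using assms(1,2) by simp
  finally show ?thesis .
qed

text \<open>\<^term>\<open>weighted_score P m x\<close> is \<open>\<rho>(x) P(x)\<close> in the notation of the paper.\<close>

definition weighted_score :: "(nat \<Rightarrow> real) \<Rightarrow> real \<Rightarrow> nat \<Rightarrow> real" where
  "weighted_score P m x = real (Suc x) * P (Suc x) / m - P x"

definition fisher_density :: "(nat \<Rightarrow> real) \<Rightarrow> real \<Rightarrow> nat \<Rightarrow> real" where
  "fisher_density P m x = (if P x = 0 then 0 else (weighted_score P m x)\<^sup>2 / P x)"

lemma fisher_density_nonneg: "P x \<ge> 0 \<Longrightarrow> fisher_density P m x \<ge> 0"
  by (simp add: fisher_density_def)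

lemma fisher_term_eq_fisher_density:
  assumes "fisher_term P m x \<noteq> \<top>"
  shows "fisher_term P m x = ennreal (fisher_density P m x)"
    and "(weighted_score P m x)\<^sup>2 = P x * fisher_density P m x"
  using assms
  by (auto simp: fisher_term_def fisher_density_def weighted_score_def Let_def split: if_splits)

lemma fisher_term_finite:
  assumes "(\<Sum>x. fisher_term P m x) \<noteq> \<top>"
  shows "fisher_term P m x \<noteq> \<top>"
  using assms ennreal_suminf_lessD[of "fisher_term P m" \<top> x] by (simp add: top.not_eq_extremum)

lemma scaled_fisher_eq_fisher_density:
  assumes P: "\<And>x. P x \<ge> 0" and fin: "(\<Sum>x. fisher_term P m x) \<noteq> \<top>"
  shows "summable (fisher_density P m)"
    and "scaled_fisher P m = ennreal m * ennreal (\<Sum>x. fisher_density P m x)"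
proof -
  have eq: "fisher_term P m = (\<lambda>x. ennreal (fisher_density P m x))"
    using fin by (intro ext fisher_term_eq_fisher_density(1) fisher_term_finite)
  show sm: "summable (fisher_density P m)"
    using fin unfolding eq by (intro summable_suminf_not_top fisher_density_nonneg P)
  show "scaled_fisher P m = ennreal m * ennreal (\<Sum>x. fisher_density P m x)"
    unfolding scaled_fisher_def eq by (simp add: suminf_ennreal2 fisher_density_nonneg P sm)
qed

lemma fisher_term_le_Cauchy_Schwarz:
  fixes R w g k :: "nat \<Rightarrow> real"
  assumes "finite A"
    and R: "R s = (\<Sum>x\<in>A. w x)" and score: "weighted_score R m s = (\<Sum>x\<in>A. g x)"
    and w: "\<And>x. x \<in> A \<Longrightarrow> w x \<ge> 0" and k: "\<And>x. x \<in> A \<Longrightarrow> k x \<ge> 0"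
    and gwk: "\<And>x. x \<in> A \<Longrightarrow> (g x)\<^sup>2 = w x * k x"
  shows "fisher_term R m s \<le> ennreal (\<Sum>x\<in>A. k x)"
proof (cases "R s = 0")
  case True
  then have "w x = 0" if "x \<in> A" for x
    using R w that \<open>finite A\<close> sum_nonneg_eq_0_iff by metis
  then have "weighted_score R m s = 0"
    using score gwk by simp
  then show ?thesis
    using True by (simp add: fisher_term_def weighted_score_def Let_def)
next
  case False
  then have "R s > 0"
    using R w by (simp add: order_less_le sum_nonneg)
  moreover have "(weighted_score R m s)\<^sup>2 \<le> R s * (\<Sum>x\<in>A. k x)"
    unfolding score R using w k gwk by (rule Cauchy_Schwarz_sum_factored)
  ultimately show ?thesis
    by (simp add: fisher_term_def weighted_score_def Let_def divide_le_eq mult.commute ennreal_leI)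
qed

lemma weighted_score_sums_zero:
  fixes P :: "nat \<Rightarrow> real"
  assumes P: "\<And>x. P x \<ge> 0" and "m > 0" and "P sums 1" and mean: "(\<lambda>x. real x * P x) sums m"
  shows "weighted_score P m sums 0" and "summable (\<lambda>x. norm (weighted_score P m x))"
proof -
  have shifted: "(\<lambda>x. real (Suc x) * P (Suc x)) sums m"
    using mean by (subst sums_Suc_iff) simp
  have "(\<lambda>x. real (Suc x) * P (Suc x) / m - P x) sums (m / m - 1)"
    by (intro sums_diff sums_divide shifted \<open>P sums 1\<close>)
  then show "weighted_score P m sums 0"
    using \<open>m > 0\<close> by (simp add: weighted_score_def[abs_def])
  show "summable (\<lambda>x. norm (weighted_score P m x))"
  proof (rule summable_comparison_test'[where N = 0])
    show "summable (\<lambda>x. real (Suc x) * P (Suc x) / m + P x)"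
      using shifted \<open>P sums 1\<close> by (intro summable_add summable_divide sums_summable)
    show "norm (norm (weighted_score P m x)) \<le> real (Suc x) * P (Suc x) / m + P x" for x
      using P[of x] P[of "Suc x"] \<open>m > 0\<close> by (simp add: weighted_score_def abs_if)
  qed
qed

definition mass_convolution :: "(nat \<Rightarrow> real) \<Rightarrow> (nat \<Rightarrow> real) \<Rightarrow> nat \<Rightarrow> real" where
  "mass_convolution P Q s = (\<Sum>x\<le>s. P x * Q (s - x))"

lemma Suc_mult_mass_convolution:
  fixes P Q :: "nat \<Rightarrow> real"
  shows "real (Suc s) * mass_convolution P Q (Suc s) =
    mass_convolution (\<lambda>x. real (Suc x) * P (Suc x)) Q s
    + mass_convolution P (\<lambda>y. real (Suc y) * Q (Suc y)) s"
proof -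
  have "real (Suc s) * mass_convolution P Q (Suc s) =
      (\<Sum>x\<le>Suc s. real x * P x * Q (Suc s - x)) + (\<Sum>x\<le>Suc s. P x * (real (Suc s - x) * Q (Suc s - x)))"
    unfolding mass_convolution_def sum_distrib_left sum.distrib[symmetric]
    by (intro sum.cong refl) (simp add: of_nat_diff algebra_simps)
  also have "(\<Sum>x\<le>Suc s. real x * P x * Q (Suc s - x)) = mass_convolution (\<lambda>x. real (Suc x) * P (Suc x)) Q s"
    unfolding mass_convolution_def by (subst sum.atMost_Suc_shift) simp
  also have "(\<Sum>x\<le>Suc s. P x * (real (Suc s - x) * Q (Suc s - x))) = mass_convolution P (\<lambda>y. real (Suc y) * Q (Suc y)) s"
    unfolding mass_convolution_def by (simp add: Suc_diff_le add_diff_eq)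
  finally show ?thesis .
qed

lemma weighted_score_mass_convolution:
  fixes P Q :: "nat \<Rightarrow> real"
  assumes "a > 0" "b > 0"
  shows "weighted_score (mass_convolution P Q) (a + b) s =
    (\<Sum>x\<le>s. a / (a + b) * weighted_score P a x * Q (s - x) + b / (a + b) * P x * weighted_score Q b (s - x))"
proof -
  have P: "a / (a + b) * weighted_score P a x = real (Suc x) * P (Suc x) / (a + b) - a / (a + b) * P x" for x
    using assms by (simp add: weighted_score_def right_diff_distrib)
  have Q: "b / (a + b) * weighted_score Q b y = real (Suc y) * Q (Suc y) / (a + b) - b / (a + b) * Q y" for y
    using assms by (simp add: weighted_score_def right_diff_distrib)
  have sum_one: "a / (a + b) + b / (a + b) = 1"
    using assms by (simp add: add_divide_distrib[symmetric])
  have "a / (a + b) * weighted_score P a x * Q (s - x) + b / (a + b) * P x * weighted_score Q b (s - x) =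
      real (Suc x) * P (Suc x) * Q (s - x) / (a + b) + P x * (real (Suc (s - x)) * Q (Suc (s - x))) / (a + b)
      - P x * Q (s - x)" for x
  proof -
    have "a / (a + b) * weighted_score P a x * Q (s - x) + b / (a + b) * P x * weighted_score Q b (s - x) =
        (a / (a + b) * weighted_score P a x) * Q (s - x) + P x * (b / (a + b) * weighted_score Q b (s - x))"
      by (simp only: ac_simps)
    also have "\<dots> = real (Suc x) * P (Suc x) * Q (s - x) / (a + b) + P x * (real (Suc (s - x)) * Q (Suc (s - x))) / (a + b)
        - (a / (a + b) + b / (a + b)) * (P x * Q (s - x))"
      unfolding P Q by (simp add: algebra_simps)
    finally show ?thesis
      unfolding sum_one by simp
  qed
  then have "(\<Sum>x\<le>s. a / (a + b) * weighted_score P a x * Q (s - x) + b / (a + b) * P x * weighted_score Q b (s - x)) =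
      mass_convolution (\<lambda>x. real (Suc x) * P (Suc x)) Q s / (a + b)
      + mass_convolution P (\<lambda>y. real (Suc y) * Q (Suc y)) s / (a + b) - mass_convolution P Q s"
    by (simp add: mass_convolution_def sum_subtractf sum.distrib sum_divide_distrib)
  also have "\<dots> = weighted_score (mass_convolution P Q) (a + b) s"
    by (simp only: weighted_score_def Suc_mult_mass_convolution add_divide_distrib)
  finally show ?thesis ..
qed

lemma mixed_square_factor:
  fixes u v p q fu fv \<alpha> \<beta> :: real
  assumes u: "u\<^sup>2 = p * fu" and v: "v\<^sup>2 = q * fv"
    and "p \<ge> 0" "q \<ge> 0" "fu \<ge> 0" "fv \<ge> 0"
  shows "(\<alpha> * u * q + \<beta> * p * v)\<^sup>2 = p * q * (\<alpha>\<^sup>2 * fu * q + 2 * \<alpha> * \<beta> * u * v + \<beta>\<^sup>2 * p * fv)"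
    and "\<alpha>\<^sup>2 * fu * q + 2 * \<alpha> * \<beta> * u * v + \<beta>\<^sup>2 * p * fv \<ge> 0"
proof -
  have "p * q * (\<alpha>\<^sup>2 * fu * q + 2 * \<alpha> * \<beta> * u * v + \<beta>\<^sup>2 * p * fv) =
      \<alpha>\<^sup>2 * (p * fu) * q\<^sup>2 + 2 * \<alpha> * \<beta> * p * q * u * v + \<beta>\<^sup>2 * p\<^sup>2 * (q * fv)"
    by (simp add: power2_eq_square algebra_simps)
  then show sq: "(\<alpha> * u * q + \<beta> * p * v)\<^sup>2 = p * q * (\<alpha>\<^sup>2 * fu * q + 2 * \<alpha> * \<beta> * u * v + \<beta>\<^sup>2 * p * fv)"
    unfolding u[symmetric] v[symmetric] by (simp add: power2_eq_square algebra_simps)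
  show "\<alpha>\<^sup>2 * fu * q + 2 * \<alpha> * \<beta> * u * v + \<beta>\<^sup>2 * p * fv \<ge> 0"
  proof (cases "p = 0 \<or> q = 0")
    case True
    then show ?thesis
      using u v assms(3-6) by auto
  next
    case False
    then have "p * q > 0"
      using assms(3,4) by (simp add: less_le)
    then show ?thesis
      using sq by (metis zero_le_power2 zero_le_mult_iff not_le order_less_imp_le)
  qed
qed

lemma sums_mass_convolution_fisher_kernel:
  fixes P Q :: "nat \<Rightarrow> real"
  assumes P: "\<And>x. P x \<ge> 0" "P sums 1" "(\<lambda>x. real x * P x) sums a" "a > 0"
    and Q: "\<And>x. Q x \<ge> 0" "Q sums 1" "(\<lambda>x. real x * Q x) sums b" "b > 0"
    and "summable (fisher_density P a)" "summable (fisher_density Q b)"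
  shows "(\<lambda>s. \<Sum>x\<le>s. \<alpha>\<^sup>2 * fisher_density P a x * Q (s - x)
      + 2 * \<alpha> * \<beta> * weighted_score P a x * weighted_score Q b (s - x)
      + \<beta>\<^sup>2 * P x * fisher_density Q b (s - x))
    sums (\<alpha>\<^sup>2 * (\<Sum>x. fisher_density P a x) + \<beta>\<^sup>2 * (\<Sum>x. fisher_density Q b x))"
proof -
  let ?wP = "weighted_score P a" and ?wQ = "weighted_score Q b"
  let ?fP = "fisher_density P a" and ?fQ = "fisher_density Q b"
  have "(\<lambda>s. \<Sum>x\<le>s. ?fP x * Q (s - x)) sums ((\<Sum>x. ?fP x) * (\<Sum>x. Q x))"
    using assms sums_summable[OF Q(2)] fisher_density_nonneg by (intro Cauchy_product_sums) auto
  then have fP: "(\<lambda>s. \<Sum>x\<le>s. ?fP x * Q (s - x)) sums (\<Sum>x. ?fP x)"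
    using sums_unique[OF Q(2)] by simp
  have "(\<lambda>s. \<Sum>x\<le>s. ?wP x * ?wQ (s - x)) sums ((\<Sum>x. ?wP x) * (\<Sum>x. ?wQ x))"
    using weighted_score_sums_zero(2)[OF P(1,4,2,3)] weighted_score_sums_zero(2)[OF Q(1,4,2,3)]
    by (rule Cauchy_product_sums)
  then have w: "(\<lambda>s. \<Sum>x\<le>s. ?wP x * ?wQ (s - x)) sums 0"
    using sums_unique[OF weighted_score_sums_zero(1)[OF P(1,4,2,3)]] by simp
  have "(\<lambda>s. \<Sum>x\<le>s. P x * ?fQ (s - x)) sums ((\<Sum>x. P x) * (\<Sum>x. ?fQ x))"
    using assms sums_summable[OF P(2)] fisher_density_nonneg by (intro Cauchy_product_sums) auto
  then have fQ: "(\<lambda>s. \<Sum>x\<le>s. P x * ?fQ (s - x)) sums (\<Sum>x. ?fQ x)"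
    using sums_unique[OF P(2)] by simp
  have "(\<lambda>s. \<alpha>\<^sup>2 * (\<Sum>x\<le>s. ?fP x * Q (s - x)) + 2 * \<alpha> * \<beta> * (\<Sum>x\<le>s. ?wP x * ?wQ (s - x))
      + \<beta>\<^sup>2 * (\<Sum>x\<le>s. P x * ?fQ (s - x)))
      sums (\<alpha>\<^sup>2 * (\<Sum>x. ?fP x) + 2 * \<alpha> * \<beta> * 0 + \<beta>\<^sup>2 * (\<Sum>x. ?fQ x))"
    by (intro sums_add sums_mult fP w fQ)
  then show ?thesis
    by (simp add: sum.distrib sum_distrib_left mult.assoc)
qed

lemma fisher_sum_mass_convolution_le:
  fixes P Q :: "nat \<Rightarrow> real"
  assumes P: "\<And>x. P x \<ge> 0" "P sums 1" "(\<lambda>x. real x * P x) sums a" "a > 0"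
    and Q: "\<And>x. Q x \<ge> 0" "Q sums 1" "(\<lambda>x. real x * Q x) sums b" "b > 0"
    and finP: "(\<Sum>x. fisher_term P a x) \<noteq> \<top>" and finQ: "(\<Sum>x. fisher_term Q b x) \<noteq> \<top>"
  shows "(\<Sum>s. fisher_term (mass_convolution P Q) (a + b) s)
    \<le> ennreal ((a / (a + b))\<^sup>2 * (\<Sum>x. fisher_density P a x) + (b / (a + b))\<^sup>2 * (\<Sum>x. fisher_density Q b x))"
proof -
  define \<alpha> where "\<alpha> = a / (a + b)"
  define \<beta> where "\<beta> = b / (a + b)"
  \<comment> \<open>\<open>k s x = P(x) Q(s - x) (\<alpha> \<rho>\<^sub>P(x) + \<beta> \<rho>\<^sub>Q(s - x))^2\<close>, written without dividing by the masses\<close>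
  define k where "k s x = \<alpha>\<^sup>2 * fisher_density P a x * Q (s - x)
    + 2 * \<alpha> * \<beta> * weighted_score P a x * weighted_score Q b (s - x)
    + \<beta>\<^sup>2 * P x * fisher_density Q b (s - x)" for s x
  note square_factor = mixed_square_factor[OF
      fisher_term_eq_fisher_density(2)[OF fisher_term_finite[OF finP]]
      fisher_term_eq_fisher_density(2)[OF fisher_term_finite[OF finQ]]
      P(1) Q(1) fisher_density_nonneg[OF P(1)] fisher_density_nonneg[OF Q(1)]]
  have k_nonneg: "k s x \<ge> 0" for s x
    unfolding k_def by (rule square_factor(2))
  have "fisher_term (mass_convolution P Q) (a + b) s \<le> ennreal (\<Sum>x\<le>s. k s x)" for s
  proof (rule fisher_term_le_Cauchy_Schwarz)
    show "weighted_score (mass_convolution P Q) (a + b) s =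
        (\<Sum>x\<le>s. \<alpha> * weighted_score P a x * Q (s - x) + \<beta> * P x * weighted_score Q b (s - x))"
      unfolding \<alpha>_def \<beta>_def using P(4) Q(4) by (rule weighted_score_mass_convolution)
  qed (use P(1) Q(1) k_nonneg square_factor(1) in \<open>auto simp: mass_convolution_def k_def\<close>)
  then have "(\<Sum>s. fisher_term (mass_convolution P Q) (a + b) s) \<le> (\<Sum>s. ennreal (\<Sum>x\<le>s. k s x))"
    by (intro suminf_le summableI)
  also have "\<dots> = ennreal (\<alpha>\<^sup>2 * (\<Sum>x. fisher_density P a x) + \<beta>\<^sup>2 * (\<Sum>x. fisher_density Q b x))"
    using sums_mass_convolution_fisher_kernel[OF P Q scaled_fisher_eq_fisher_density(1)[OF P(1) finP]
        scaled_fisher_eq_fisher_density(1)[OF Q(1) finQ], of \<alpha> \<beta>] k_nonneg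
    by (simp add: k_def suminf_ennreal2 sums_summable sums_unique[symmetric] sum_nonneg)
  finally show ?thesis
    unfolding \<alpha>_def \<beta>_def .
qed

lemma scaled_fisher_mass_convolution_le:
  fixes P Q :: "nat \<Rightarrow> real"
  assumes P: "\<And>x. P x \<ge> 0" "P sums 1" "(\<lambda>x. real x * P x) sums a" "a > 0"
    and Q: "\<And>x. Q x \<ge> 0" "Q sums 1" "(\<lambda>x. real x * Q x) sums b" "b > 0"
  shows "scaled_fisher (mass_convolution P Q) (a + b)
    \<le> ennreal (a / (a + b)) * scaled_fisher P a + ennreal (b / (a + b)) * scaled_fisher Q b"
proof (cases "(\<Sum>x. fisher_term P a x) = \<top> \<or> (\<Sum>x. fisher_term Q b x) = \<top>")
  case True
  then show ?thesis
    using P(4) Q(4) by (auto simp: scaled_fisher_def ennreal_mult_eq_top_iff)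
next
  case False
  define FP where "FP = (\<Sum>x. fisher_density P a x)"
  define FQ where "FQ = (\<Sum>x. fisher_density Q b x)"
  have "FP \<ge> 0" "FQ \<ge> 0"
    unfolding FP_def FQ_def using False P(1) Q(1)
    by (auto intro!: suminf_nonneg fisher_density_nonneg scaled_fisher_eq_fisher_density(1))
  have "scaled_fisher (mass_convolution P Q) (a + b)
      \<le> ennreal (a + b) * ennreal ((a / (a + b))\<^sup>2 * FP + (b / (a + b))\<^sup>2 * FQ)"
    unfolding scaled_fisher_def FP_def FQ_def using False
    by (intro mult_left_mono fisher_sum_mass_convolution_le P Q) auto
  also have "\<dots> = ennreal ((a + b) * ((a / (a + b))\<^sup>2 * FP + (b / (a + b))\<^sup>2 * FQ))"
    using P(4) Q(4) \<open>FP \<ge> 0\<close> \<open>FQ \<ge> 0\<close> by (simp add: ennreal_mult)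
  also have "(a + b) * ((a / (a + b))\<^sup>2 * FP + (b / (a + b))\<^sup>2 * FQ) = a / (a + b) * (a * FP) + b / (a + b) * (b * FQ)"
  proof -
    have "(a + b) * (x / (a + b))\<^sup>2 = x / (a + b) * x" for x
      using P(4) Q(4) by (simp add: power2_eq_square)
    then show ?thesis
      by (simp add: distrib_left mult.assoc[symmetric])
  qed
  also have "\<dots> = ennreal (a / (a + b)) * ennreal (a * FP) + ennreal (b / (a + b)) * ennreal (b * FQ)"
    using P(4) Q(4) \<open>FP \<ge> 0\<close> \<open>FQ \<ge> 0\<close> by (simp add: ennreal_plus ennreal_mult[symmetric])
  also have "\<dots> = ennreal (a / (a + b)) * scaled_fisher P a + ennreal (b / (a + b)) * scaled_fisher Q b"
    using False P(1,4) Q(1,4) \<open>FP \<ge> 0\<close> \<open>FQ \<ge> 0\<close>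
    by (simp add: scaled_fisher_eq_fisher_density(2) FP_def FQ_def ennreal_mult)
  finally show ?thesis .
qed

definition rv_mass :: "'a measure \<Rightarrow> ('a \<Rightarrow> nat) \<Rightarrow> nat \<Rightarrow> real" where
  "rv_mass M Y x = measure M {\<omega> \<in> space M. Y \<omega> = x}"

lemma K_rv_eq_scaled_fisher: "K_rv M Y = scaled_fisher (rv_mass M Y) (integral\<^sup>L M (\<lambda>\<omega>. real (Y \<omega>)))"
  by (simp add: K_rv_def rv_mass_def[abs_def])

context prob_space
begin

lemma rv_mass_sums_one:
  assumes "Y \<in> measurable M (count_space UNIV)"
  shows "rv_mass M Y sums 1"
proof -
  have "rv_mass M Y sums measure M (\<Union>x. {\<omega> \<in> space M. Y \<omega> = x})"
    unfolding rv_mass_def[abs_def] using assms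
    by (intro finite_measure_UNION) (auto simp: disjoint_family_on_def)
  moreover have "(\<Union>x. {\<omega> \<in> space M. Y \<omega> = x}) = space M"
    by auto
  ultimately show ?thesis
    by (simp add: prob_space)
qed

lemma rv_mass_mean_sums:
  assumes Y: "Y \<in> measurable M (count_space UNIV)" and int: "integrable M (\<lambda>\<omega>. real (Y \<omega>))"
  shows "(\<lambda>x. real x * rv_mass M Y x) sums expectation (\<lambda>\<omega>. real (Y \<omega>))"
proof -
  define A where "A x = {\<omega> \<in> space M. Y \<omega> = x}" for x
  have A: "A x \<in> sets M" for x
    unfolding A_def using Y by measurable
  have "disjoint_family A"
    by (auto simp: disjoint_family_on_def A_def)
  from suminf_cmult_indicator[OF this, of _ "Y _" "\<lambda>x. ennreal (real x)"]
  have "(\<integral>\<^sup>+\<omega>. ennreal (real (Y \<omega>)) \<partial>M) = (\<integral>\<^sup>+\<omega>. (\<Sum>x. ennreal (real x) * indicator (A x) \<omega>) \<partial>M)"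
    by (intro nn_integral_cong) (simp add: A_def)
  also have "\<dots> = (\<Sum>x. ennreal (real x * rv_mass M Y x))"
    using A by (simp add: nn_integral_suminf nn_integral_cmult_indicator emeasure_eq_measure
        ennreal_mult rv_mass_def A_def)
  finally have series: "(\<Sum>x. ennreal (real x * rv_mass M Y x)) = ennreal (expectation (\<lambda>\<omega>. real (Y \<omega>)))"
    using nn_integral_eq_integral[OF int] by simp
  have nonneg: "0 \<le> real x * rv_mass M Y x" for x
    by (simp add: rv_mass_def)
  have sm: "summable (\<lambda>x. real x * rv_mass M Y x)"
    using series by (intro summable_suminf_not_top nonneg) simp
  moreover have "(\<Sum>x. real x * rv_mass M Y x) = expectation (\<lambda>\<omega>. real (Y \<omega>))"
    using series nonneg sm by (simp add: suminf_ennreal2 suminf_nonneg ennreal_inj)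
  ultimately show ?thesis
    by (metis summable_sums)
qed

lemma rv_mass_add:
  assumes indep: "indep_var (count_space UNIV) U (count_space UNIV) V"
  shows "rv_mass M (\<lambda>\<omega>. U \<omega> + V \<omega>) = mass_convolution (rv_mass M U) (rv_mass M V)"
proof
  fix s
  have U: "U \<in> measurable M (count_space UNIV)" and V: "V \<in> measurable M (count_space UNIV)"
    using indep_var_rv1[OF indep] indep_var_rv2[OF indep] .
  define B where "B x = {\<omega> \<in> space M. U \<omega> = x \<and> V \<omega> = s - x}" for x
  have "{\<omega> \<in> space M. U \<omega> + V \<omega> = s} = (\<Union>x\<in>{..s}. B x)"
    by (auto simp: B_def)
  moreover have "B x \<in> sets M" for x
    unfolding B_def using U V by measurable
  moreover have "disjoint_family_on B {..s}"
    by (auto simp: disjoint_family_on_def B_def)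
  ultimately have "rv_mass M (\<lambda>\<omega>. U \<omega> + V \<omega>) s = (\<Sum>x\<le>s. measure M (B x))"
    by (simp add: rv_mass_def finite_measure_finite_Union image_subset_iff)
  also have "\<dots> = (\<Sum>x\<le>s. rv_mass M U x * rv_mass M V (s - x))"
  proof (intro sum.cong refl)
    fix x
    have "B x = (\<lambda>\<omega>. (U \<omega>, V \<omega>)) -` ({x} \<times> {s - x}) \<inter> space M"
      by (auto simp: B_def)
    then have "measure M (B x) = measure M (U -` {x} \<inter> space M) * measure M (V -` {s - x} \<inter> space M)"
      using indep_varD[OF indep, of "{x}" "{s - x}"] by simp
    then show "measure M (B x) = rv_mass M U x * rv_mass M V (s - x)"
      by (simp add: rv_mass_def vimage_def Int_def conj_commute)
  qed
  finally show "rv_mass M (\<lambda>\<omega>. U \<omega> + V \<omega>) s = mass_convolution (rv_mass M U) (rv_mass M V) s"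
    by (simp add: mass_convolution_def)
qed

lemma K_rv_add_le:
  assumes indep: "indep_var (count_space UNIV) U (count_space UNIV) V"
    and int: "integrable M (\<lambda>\<omega>. real (U \<omega>))" "integrable M (\<lambda>\<omega>. real (V \<omega>))"
    and pos: "expectation (\<lambda>\<omega>. real (U \<omega>)) > 0" "expectation (\<lambda>\<omega>. real (V \<omega>)) > 0"
  shows "K_rv M (\<lambda>\<omega>. U \<omega> + V \<omega>)
    \<le> ennreal (expectation (\<lambda>\<omega>. real (U \<omega>))
          / (expectation (\<lambda>\<omega>. real (U \<omega>)) + expectation (\<lambda>\<omega>. real (V \<omega>)))) * K_rv M U
      + ennreal (expectation (\<lambda>\<omega>. real (V \<omega>))
          / (expectation (\<lambda>\<omega>. real (U \<omega>)) + expectation (\<lambda>\<omega>. real (V \<omega>)))) * K_rv M V"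
proof -
  have U: "U \<in> measurable M (count_space UNIV)" and V: "V \<in> measurable M (count_space UNIV)"
    using indep_var_rv1[OF indep] indep_var_rv2[OF indep] .
  have "expectation (\<lambda>\<omega>. real (U \<omega> + V \<omega>)) = expectation (\<lambda>\<omega>. real (U \<omega>)) + expectation (\<lambda>\<omega>. real (V \<omega>))"
    using int by simp
  then show ?thesis
    unfolding K_rv_eq_scaled_fisher rv_mass_add[OF indep]
    by (auto intro!: scaled_fisher_mass_convolution_le rv_mass_sums_one rv_mass_mean_sums
        simp: U V int pos rv_mass_def)
qed

lemma indep_var_sum:
  fixes X :: "'i \<Rightarrow> 'a \<Rightarrow> nat"
  assumes "indep_vars (\<lambda>_. count_space UNIV) X I" "finite J" "J \<subseteq> I" "i \<in> I" "i \<notin> J"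
  shows "indep_var (count_space UNIV) (\<lambda>\<omega>. \<Sum>j\<in>J. X j \<omega>) (count_space UNIV) (X i)"
proof -
  have "indep_var (count_space UNIV) ((\<lambda>f. \<Sum>j\<in>J. f j) \<circ> (\<lambda>\<omega>. restrict (\<lambda>j. X j \<omega>) J))
      (count_space UNIV) ((\<lambda>f. f i) \<circ> (\<lambda>\<omega>. restrict (\<lambda>j. X j \<omega>) {i}))"
    using assms by (intro indep_var_compose[OF indep_var_restrict[OF assms(1)]]) auto
  then show ?thesis
    by (simp add: comp_def)
qed

lemma K_rv_sum_le:
  fixes X :: "'i \<Rightarrow> 'a \<Rightarrow> nat"
  assumes indep: "indep_vars (\<lambda>_. count_space UNIV) X I"
    and "finite J" "J \<noteq> {}" "J \<subseteq> I"
    and int: "\<And>i. i \<in> J \<Longrightarrow> integrable M (\<lambda>\<omega>. real (X i \<omega>))"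
    and pos: "\<And>i. i \<in> J \<Longrightarrow> expectation (\<lambda>\<omega>. real (X i \<omega>)) > 0"
  shows "K_rv M (\<lambda>\<omega>. \<Sum>i\<in>J. X i \<omega>)
    \<le> (\<Sum>i\<in>J. ennreal (expectation (\<lambda>\<omega>. real (X i \<omega>))
                     / (\<Sum>j\<in>J. expectation (\<lambda>\<omega>. real (X j \<omega>)))) * K_rv M (X i))"
  using \<open>finite J\<close> \<open>J \<noteq> {}\<close> \<open>J \<subseteq> I\<close> int pos
proof (induction J rule: finite_ne_induct)
  case (singleton i)
  then show ?case
    by simp
next
  case (insert i J)
  let ?E = "\<lambda>i. expectation (\<lambda>\<omega>. real (X i \<omega>))"
  define \<mu> where "\<mu> = (\<Sum>j\<in>J. ?E j)"
  have "\<mu> > 0"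
    unfolding \<mu>_def using insert by (intro sum_pos) auto
  have "expectation (\<lambda>\<omega>. real (\<Sum>j\<in>J. X j \<omega>)) = \<mu>"
    unfolding \<mu>_def using insert by (simp add: Bochner_Integration.integral_sum)
  then have "K_rv M (\<lambda>\<omega>. \<Sum>j\<in>insert i J. X j \<omega>)
      \<le> ennreal (\<mu> / (\<mu> + ?E i)) * K_rv M (\<lambda>\<omega>. \<Sum>j\<in>J. X j \<omega>) + ennreal (?E i / (\<mu> + ?E i)) * K_rv M (X i)"
    using K_rv_add_le[OF indep_var_sum[OF indep], of J i] insert \<open>\<mu> > 0\<close>
    by (simp add: add.commute)
  also have "\<dots> \<le> ennreal (\<mu> / (\<mu> + ?E i)) * (\<Sum>j\<in>J. ennreal (?E j / \<mu>) * K_rv M (X j))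
      + ennreal (?E i / (\<mu> + ?E i)) * K_rv M (X i)"
    using insert unfolding \<mu>_def by (intro add_right_mono mult_left_mono) auto
  also have "\<dots> = (\<Sum>j\<in>insert i J. ennreal (?E j / (\<mu> + ?E i)) * K_rv M (X j))"
  proof -
    have "ennreal (\<mu> / (\<mu> + ?E i)) * ennreal (?E j / \<mu>) = ennreal (?E j / (\<mu> + ?E i))" if "j \<in> J" for j
      using insert that \<open>\<mu> > 0\<close> by (simp add: ennreal_mult[symmetric] less_imp_le)
    then show ?thesis
      using insert by (simp add: sum_distrib_left mult.assoc[symmetric] add.commute)
  qed
  finally show ?case
    using insert by (simp add: \<mu>_def add.commute)
qed

end

theorem proposition3:
  fixes M :: "'a measure" and X :: "nat \<Rightarrow> 'a \<Rightarrow> nat" and n :: nat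
  assumes "prob_space M"
    and "n \<ge> 1"
    and "prob_space.indep_vars M (\<lambda>_. count_space UNIV) X {1..n}"
    and "\<forall>i\<in>{1..n}. integrable M (\<lambda>\<omega>. real (X i \<omega>))"
    and "\<forall>i\<in>{1..n}. integral\<^sup>L M (\<lambda>\<omega>. real (X i \<omega>)) > 0"
  shows "K_rv M (\<lambda>\<omega>. \<Sum>i=1..n. X i \<omega>)
           \<le> (\<Sum>i=1..n. ennreal (integral\<^sup>L M (\<lambda>\<omega>. real (X i \<omega>))
                                 / (\<Sum>j=1..n. integral\<^sup>L M (\<lambda>\<omega>. real (X j \<omega>))))
                       * K_rv M (X i))"
proof -
  interpret prob_space M
    by (rule assms(1))
  have "{1..n} \<noteq> {}"
    using assms(2) by simp
  then show ?thesis
    using K_rv_sum_le[OF assms(3) finite_atLeastAtMost _ subset_refl] assms(4,5) by simp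
qed

end
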